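(* Let $1\le D\le K-1$ and let $\mathbf{L}$ be the $(K,D)$ AIR matrix. Let $\mathbf{L}(j,k)=1$ with $j\ge K-D$. (1) If the entry $(j,k)$ lies in the odd submatrix $\mathbf{I}_{\beta_{2i+1}\lambda_{2i+1}\times\lambda_{2i+1}}$ for some $i\in[0:\lceil l/2\rceil-1]$, then $d_{up}(j,k)=\lambda_{2i+1}$. (2) If the entry $(j,k)$ lies in the even submatrix $\mathbf{I}_{\lambda_{2i}\times\beta_{2i}\lambda_{2i}}$ for some $i\in[0:\lfloor l/2\rfloor]$, and $k_R=k-(K-D-\lambda_{2i-1})=c\lambda_{2i}+d$ with integers $c\ge0$, $0\le d<\lambda_{2i}$, then $d_{up}(j,k)=\lambda_{2i-1}-c\lambda_{2i}$.
   Context: Notation: $[a:b]=\{a,\dots,b\}$. Let $K,D$ be integers with $1\le D\le K-1$. Define $\lambda_{-1}=K-D$, $\lambda_0=D$ and recursively, by Euclidean division, $\lambda_{i-1}=\beta_i\lambda_i+\lambda_{i+1}$ with $0\le\lambda_{i+1}<\lambda_i$, for $i=0,1,2,\dots$, stopping at the index $l\ge0$ with $\lambda_{l+1}=0$; $\beta_0\ge0$ may be $0$, $\beta_i\ge1$ for $i\ge1$. Set $\lambda_j=0$ for $j>l$. For $n\mid m$, $\mathbf{I}_{m\times n}$ is $m/n$ copies of the $n\times n$ identity stacked vertically and $\mathbf{I}_{n\times m}$ its transpose. The $(K,D)$ AIR matrix $\mathbf{L}$ is the $K\times(K-D)$ $0/1$ matrix (rows $[0:K-1]$, columns $[0:K-D-1]$)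 that is zero except in the blocks: the $(K-D)\times(K-D)$ identity in rows and columns $[0:K-D-1]$; for $0\le 2i\le l$, the even submatrix $\mathbf{I}_{\lambda_{2i}\times\beta_{2i}\lambda_{2i}}$ in rows $[K-\lambda_{2i}:K-1]$, columns $[K-D-\lambda_{2i-1}:K-D-\lambda_{2i+1}-1]$ (absent if $i=0,\beta_0=0$); for $1\le 2i+1\le l$, the odd submatrix $\mathbf{I}_{\beta_{2i+1}\lambda_{2i+1}\times\lambda_{2i+1}}$ in rows $[K-\lambda_{2i}:K-\lambda_{2i+2}-1]$, columns $[K-D-\lambda_{2i+1}:K-D-1]$. Up-distance: for $\mathbf{L}(j,k)=1$ with $j\ge K-D$, let $j'$ be the largest row index with $j'<j$ and $\mathbf{L}(j',k)=1$; then $d_{up}(j,k)=j-j'$. *)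

theory Defs
  imports Main
begin

(* lamseq K D n = lambda_{n-1}: Euclidean remainder sequence starting from
   lambda_{-1} = K-D, lambda_0 = D; once a zero occurs all later terms are 0. *)
fun lamseq :: "int \<Rightarrow> int \<Rightarrow> nat \<Rightarrow> int" where
  "lamseq K D 0 = K - D"
| "lamseq K D (Suc 0) = D"
| "lamseq K D (Suc (Suc n)) =
     (if lamseq K D (Suc n) = 0 then 0 else lamseq K D n mod lamseq K D (Suc n))"

definition lam :: "int \<Rightarrow> int \<Rightarrow> int \<Rightarrow> int" where
  "lam K D i = (if i < -1 then 0 else lamseq K D (nat (i + 1)))"

definition beta :: "int \<Rightarrow> int \<Rightarrow> int \<Rightarrow> int" where
  "beta K D i = lam K D (i - 1) div lam K D i"

definition ell :: "int \<Rightarrow> int \<Rightarrow> nat" where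
  "ell K D = (LEAST n::nat. lam K D (int n + 1) = 0)"

definition in_even :: "int \<Rightarrow> int \<Rightarrow> int \<Rightarrow> int \<Rightarrow> int \<Rightarrow> bool" where
  "in_even K D i j k \<longleftrightarrow>
     K - lam K D (2*i) \<le> j \<and> j \<le> K - 1 \<and>
     K - D - lam K D (2*i - 1) \<le> k \<and> k \<le> K - D - lam K D (2*i + 1) - 1"

definition in_odd :: "int \<Rightarrow> int \<Rightarrow> int \<Rightarrow> int \<Rightarrow> int \<Rightarrow> bool" where
  "in_odd K D i j k \<longleftrightarrow>
     K - lam K D (2*i) \<le> j \<and> j \<le> K - lam K D (2*i + 2) - 1 \<and>
     K - D - lam K D (2*i + 1) \<le> k \<and> k \<le> K - D - 1"

(* Inside the even block, relative entry (r,c) is 1 iff r = c mod lambda_{2i}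
   (horizontal concatenation of identities); inside the odd block, (r,c) is 1
   iff r mod lambda_{2i+1} = c (vertical stacking of identities). *)
definition AIR :: "int \<Rightarrow> int \<Rightarrow> int \<Rightarrow> int \<Rightarrow> nat" where
  "AIR K D j k =
    (if 0 \<le> j \<and> j < K \<and> 0 \<le> k \<and> k < K - D \<and>
        ((j < K - D \<and> j = k) \<or>
         (\<exists>i\<ge>0. 2*i \<le> int (ell K D) \<and> in_even K D i j k \<and>
             j - (K - lam K D (2*i)) = (k - (K - D - lam K D (2*i - 1))) mod lam K D (2*i)) \<or>
         (\<exists>i\<ge>0. 2*i + 1 \<le> int (ell K D) \<and> in_odd K D i j k \<and>
             (j - (K - lam K D (2*i))) mod lam K D (2*i + 1) = k - (K - D - lam K D (2*i + 1))))
     then 1 else 0)"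

definition d_up :: "int \<Rightarrow> int \<Rightarrow> int \<Rightarrow> int \<Rightarrow> int" where
  "d_up K D j k = j - (GREATEST j'. j' < j \<and> AIR K D j' k = 1)"

end

theory Submission
  imports Defs
begin

text \<open>Let \<open>x = k - (K - D) < 0\<close> be the offset of column \<open>k\<close> from the last column.
  Whenever column \<open>k\<close> meets the even block \<open>i\<close>, i.e. \<open>x \<ge> -\<lambda>\<^bsub>2i-1\<^esub>\<close>, the last one of
  column \<open>k\<close> strictly above the block (row \<open>K - \<lambda>\<^bsub>2i\<^esub>\<close>) lies exactly \<open>|x|\<close> rows above it:
  for \<open>i = 0\<close> it is the diagonal entry \<open>(k, k)\<close>; for \<open>i \<ge> 1\<close> it lies in the odd block
  \<open>i - 1\<close>, whose ones in a column recur with period \<open>\<lambda>\<^bsub>2i-1\<^esub>\<close> and whose height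
  \<open>\<beta>\<^bsub>2i-1\<^esub>\<lambda>\<^bsub>2i-1\<^esub>\<close> is a multiple of that period (Euclid's step
  \<open>\<lambda>\<^bsub>2i-2\<^esub> = \<beta>\<^bsub>2i-1\<^esub>\<lambda>\<^bsub>2i-1\<^esub> + \<lambda>\<^bsub>2i\<^esub>\<close>).
  Part (2) follows since an even block has a single one per column, at relative row \<open>d\<close>.
  Part (1) follows since inside the odd block \<open>i\<close> the ones of a column are \<open>\<lambda>\<^bsub>2i+1\<^esub>\<close>
  apart, the first one being at relative row \<open>x + \<lambda>\<^bsub>2i+1\<^esub>\<close>, i.e. again \<open>\<lambda>\<^bsub>2i+1\<^esub>\<close> below
  the last one above the block.\<close>

lemma mod_eq_imp_le_diff:
  fixes a b m :: int
  assumes "a mod m = b mod m" and "b < a"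
  shows "m \<le> a - b"
proof -
  have "m dvd a - b" using assms(1) by (simp add: mod_eq_dvd_iff)
  then show ?thesis using assms(2) by (simp add: zdvd_imp_le)
qed

lemma lamseq_nonneg: "0 \<le> D \<Longrightarrow> D \<le> K \<Longrightarrow> 0 \<le> lamseq K D n"
  by (induction K D n rule: lamseq.induct) (auto simp: pos_mod_sign)

definition last_one_above :: "int \<Rightarrow> int \<Rightarrow> int \<Rightarrow> int \<Rightarrow> int \<Rightarrow> bool" where
  "last_one_above K D k j' j \<longleftrightarrow>
     j' < j \<and> AIR K D j' k = 1 \<and> (\<forall>r. j' < r \<and> r < j \<longrightarrow> AIR K D r k \<noteq> 1)"

lemma last_one_aboveI:
  assumes "j' < j" and "AIR K D j' k = 1"
    and "\<And>r. j' < r \<Longrightarrow> r < j \<Longrightarrow> AIR K D r k \<noteq> 1"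
  shows "last_one_above K D k j' j"
  using assms unfolding last_one_above_def by blast

lemma last_one_above_extend:
  assumes "last_one_above K D k j' b" and "b \<le> j"
    and "\<And>r. b \<le> r \<Longrightarrow> r < j \<Longrightarrow> AIR K D r k \<noteq> 1"
  shows "last_one_above K D k j' j"
  using assms unfolding last_one_above_def by (meson le_less_trans not_less)

lemma d_up_eq_last_one_above:
  assumes "last_one_above K D k j' j"
  shows "d_up K D j k = j - j'"
proof -
  have "(GREATEST r. r < j \<and> AIR K D r k = 1) = j'"
    by (rule Greatest_equality) (use assms in \<open>auto simp: last_one_above_def not_less[symmetric]\<close>)
  then show ?thesis unfolding d_up_def by simp
qed

locale air_matrix =
  fixes K D :: int
  assumes D_nonneg: "0 \<le> D" and D_le_K: "D \<le> K"
begin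

lemma lam_minus_one [simp]: "lam K D (-1) = K - D"
  by (simp add: lam_def)

lemma lam_zero [simp]: "lam K D 0 = D"
  by (simp add: lam_def)

lemma lam_nonneg: "0 \<le> lam K D n"
  by (simp add: lam_def lamseq_nonneg D_nonneg D_le_K)

lemma lam_Suc:
  assumes "0 \<le> n"
  shows "lam K D (n + 1) = (if lam K D n = 0 then 0 else lam K D (n - 1) mod lam K D n)"
proof -
  have "nat (n + 1 + 1) = Suc (Suc (nat (n - 1 + 1)))" and "nat (n + 1) = Suc (nat (n - 1 + 1))"
    using assms by simp_all
  then show ?thesis using assms by (simp add: lam_def)
qed

lemma lam_Suc_le: "0 \<le> n \<Longrightarrow> lam K D (n + 1) \<le> lam K D n"
  using lam_Suc[of n] lam_nonneg[of n] by (auto simp: pos_mod_bound less_imp_le)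

lemma lam_add_two_le:
  assumes "-1 \<le> n"
  shows "lam K D (n + 2) \<le> lam K D n"
proof -
  have "lam K D (n + 2) = (if lam K D (n + 1) = 0 then 0 else lam K D n mod lam K D (n + 1))"
    using lam_Suc[of "n + 1"] assms by (simp add: add.assoc)
  then show ?thesis using lam_nonneg[of "n + 1"] lam_nonneg[of n]
    by (auto simp: zmod_le_nonneg_dividend)
qed

lemma lam_antimono:
  assumes "0 \<le> n" and "n \<le> m"
  shows "lam K D m \<le> lam K D n"
  using assms(2)
proof (induction m rule: int_ge_induct)
  case (step m)
  then show ?case using lam_Suc_le[of m] assms(1) by linarith
qed simp

lemma lam_odd_antimono:
  assumes "0 \<le> a" and "a \<le> b"
  shows "lam K D (2 * b - 1) \<le> lam K D (2 * a - 1)"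
  using assms(2)
proof (induction b rule: int_ge_induct)
  case (step b)
  then show ?case using lam_add_two_le[of "2 * b - 1"] assms(1) by (simp add: algebra_simps)
qed simp

lemma lam_euclid:
  assumes "0 \<le> n" and "0 < lam K D n"
  shows "lam K D (n - 1) = beta K D n * lam K D n + lam K D (n + 1)"
  using lam_Suc[OF assms(1)] assms(2) by (simp add: beta_def)

lemma beta_pos:
  assumes "1 \<le> n" and "0 < lam K D n"
  shows "1 \<le> beta K D n"
proof -
  have "lam K D n \<le> lam K D (n - 1)"
    using lam_Suc_le[of "n - 1"] assms(1) by simp
  then have "lam K D n div lam K D n \<le> beta K D n"
    unfolding beta_def by (intro zdiv_mono1) (use assms(2) in auto)
  then show ?thesis using assms(2) by simp
qed

lemma in_odd_unique:
  assumes "0 \<le> i" and "0 \<le> i'" and "in_odd K D i j k" and "in_odd K D i' j k"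
  shows "i = i'"
proof (rule ccontr)
  assume "i \<noteq> i'"
  then consider "i + 1 \<le> i'" | "i' + 1 \<le> i" by linarith
  then show False
  proof cases
    case 1
    then have "lam K D (2 * i') \<le> lam K D (2 * i + 2)" using assms(1) by (intro lam_antimono) auto
    then show False using assms(3,4) unfolding in_odd_def by linarith
  next
    case 2
    then have "lam K D (2 * i) \<le> lam K D (2 * i' + 2)" using assms(2) by (intro lam_antimono) auto
    then show False using assms(3,4) unfolding in_odd_def by linarith
  qed
qed

lemma in_even_unique:
  assumes "0 \<le> i" and "0 \<le> i'" and "in_even K D i j k" and "in_even K D i' j k"
  shows "i = i'"
proof (rule ccontr)
  assume "i \<noteq> i'"
  then consider "i + 1 \<le> i'" | "i' + 1 \<le> i" by linarith
  then show False
  proof cases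
    case 1
    then have "lam K D (2 * i' - 1) \<le> lam K D (2 * (i + 1) - 1)"
      using assms(1) by (intro lam_odd_antimono) auto
    then show False using assms(3,4) unfolding in_even_def by (simp add: algebra_simps)
  next
    case 2
    then have "lam K D (2 * i - 1) \<le> lam K D (2 * (i' + 1) - 1)"
      using assms(2) by (intro lam_odd_antimono) auto
    then show False using assms(3,4) unfolding in_even_def by (simp add: algebra_simps)
  qed
qed

lemma not_in_even_and_odd:
  assumes "0 \<le> i" and "0 \<le> i'" and "in_even K D i j k" and "in_odd K D i' j k"
  shows False
proof -
  have "lam K D (2 * (i + 1) - 1) < lam K D (2 * (i' + 1) - 1)"
    using assms(3,4) unfolding in_even_def in_odd_def by (simp add: algebra_simps)
  then have "i' + 1 \<le> i" using lam_odd_antimono[of "i + 1" "i' + 1"] assms(1) by force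
  then have "lam K D (2 * i) \<le> lam K D (2 * i' + 2)" using assms(2) by (intro lam_antimono) auto
  then show False using assms(3,4) unfolding in_even_def in_odd_def by linarith
qed

lemma lam_even_le: "0 \<le> i \<Longrightarrow> lam K D (2 * i) \<le> D"
  using lam_antimono[of 0 "2 * i"] by simp

lemma lam_odd_le: "0 \<le> i \<Longrightarrow> lam K D (2 * i + 1) \<le> K - D"
  using lam_odd_antimono[of 0 "i + 1"] by (simp add: algebra_simps)

lemma AIR_cases:
  assumes "AIR K D j k = 1"
  obtains "j < K - D" and "j = k"
  | i where "0 \<le> i" and "in_even K D i j k"
      and "j - (K - lam K D (2*i)) = (k - (K - D - lam K D (2*i - 1))) mod lam K D (2*i)"
  | i where "0 \<le> i" and "in_odd K D i j k"
      and "(j - (K - lam K D (2*i))) mod lam K D (2*i + 1) = k - (K - D - lam K D (2*i + 1))"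
  using assms unfolding AIR_def by (simp split: if_splits) blast

lemma AIR_diag: "0 \<le> k \<Longrightarrow> k < K - D \<Longrightarrow> AIR K D k k = 1"
  unfolding AIR_def using D_nonneg by auto

lemma AIR_top_rows:
  assumes "AIR K D j k = 1" and "j < K - D"
  shows "j = k"
  using assms(1)
proof (cases rule: AIR_cases)
  case (2 i)
  then show ?thesis using assms(2) lam_even_le[of i] unfolding in_even_def by linarith
next
  case (3 i)
  then show ?thesis using assms(2) lam_even_le[of i] unfolding in_odd_def by linarith
qed

lemma AIR_even_block:
  assumes "0 \<le> i" and "in_even K D i j k" and "AIR K D j k = 1"
  shows "j - (K - lam K D (2*i)) = (k - (K - D - lam K D (2*i - 1))) mod lam K D (2*i)"
  using assms(3)
proof (cases rule: AIR_cases)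
  case 1
  then show ?thesis using assms(1,2) lam_even_le[of i] unfolding in_even_def by linarith
next
  case (2 i')
  then show ?thesis using in_even_unique[of i' i] assms(1,2) by auto
next
  case (3 i')
  then show ?thesis using not_in_even_and_odd[of i i'] assms(1,2) by auto
qed

lemma AIR_odd_block_iff:
  assumes "0 \<le> i" and "2*i + 1 \<le> int (ell K D)" and "in_odd K D i j k"
  shows "AIR K D j k = 1 \<longleftrightarrow>
    (j - (K - lam K D (2*i))) mod lam K D (2*i + 1) = k - (K - D - lam K D (2*i + 1))"
proof
  assume "AIR K D j k = 1"
  then show "(j - (K - lam K D (2*i))) mod lam K D (2*i + 1) = k - (K - D - lam K D (2*i + 1))"
  proof (cases rule: AIR_cases)
    case 1
    then show ?thesis using assms(1,3) lam_even_le[of i] unfolding in_odd_def by linarith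
  next
    case (2 i')
    then show ?thesis using not_in_even_and_odd[of i' i] assms(1,3) by auto
  next
    case (3 i')
    then show ?thesis using in_odd_unique[of i' i] assms(1,3) by auto
  qed
next
  assume rel: "(j - (K - lam K D (2*i))) mod lam K D (2*i + 1) = k - (K - D - lam K D (2*i + 1))"
  have "0 \<le> j \<and> j < K \<and> 0 \<le> k \<and> k < K - D"
    using assms(3) lam_even_le[OF assms(1)] lam_odd_le[OF assms(1)] lam_nonneg[of "2*i + 2"]
    unfolding in_odd_def by linarith
  then show "AIR K D j k = 1" unfolding AIR_def using assms rel by auto
qed

lemma last_one_above_first_block:
  assumes "0 \<le> k" and "k < K - D"
  shows "last_one_above K D k k (K - D)"
proof (rule last_one_aboveI)
  show "AIR K D r k \<noteq> 1" if "k < r" "r < K - D" for r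
    using AIR_top_rows[of r k] that by auto
qed (use assms AIR_diag in simp_all)

lemma last_one_above_later_block:
  assumes i1: "1 \<le> i" and il: "2*i \<le> int (ell K D) + 1"
    and kl: "K - D - lam K D (2*i - 1) \<le> k" and kr: "k < K - D"
  shows "last_one_above K D k (k + D - lam K D (2*i)) (K - lam K D (2*i))"
proof -
  define mu where "mu = lam K D (2*i - 1)"
  define base' where "base' = K - lam K D (2*i - 2)"
  define j' where "j' = k + D - lam K D (2*i)"
  have mu_pos: "0 < mu" using kl kr unfolding mu_def by simp
  have "lam K D (2*i - 2) = beta K D (2*i - 1) * mu + lam K D (2*i)"
    using lam_euclid[of "2*i - 1"] mu_pos i1 unfolding mu_def by (simp add: algebra_simps)
  moreover have "1 \<le> beta K D (2*i - 1)" using beta_pos mu_pos i1 unfolding mu_def by simp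
  ultimately obtain b where b: "1 \<le> b" "j' - base' = b * mu + (k - (K - D))"
    unfolding j'_def base'_def by (auto simp: algebra_simps)
  have idx: "lam K D (2 * (i - 1)) = lam K D (2*i - 2)"
    "lam K D (2 * (i - 1) + 1) = lam K D (2*i - 1)" "lam K D (2 * (i - 1) + 2) = lam K D (2*i)"
    by (simp_all add: algebra_simps)
  have odd_block: "in_odd K D (i - 1) r k" if "j' \<le> r" "r < K - lam K D (2*i)" for r
  proof -
    have "mu \<le> b * mu" using b(1) mu_pos by simp
    then show ?thesis using that b kl kr
      unfolding in_odd_def idx base'_def mu_def by linarith
  qed
  have "j' - base' = k - (K - D - mu) + (b - 1) * mu"
    using b(2) by (simp add: algebra_simps)
  then have j'_mod: "(j' - base') mod mu = k - (K - D - mu)"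
    using kl kr unfolding mu_def by (simp add: mod_pos_pos_trivial)
  have one_iff: "AIR K D r k = 1 \<longleftrightarrow> (r - base') mod mu = (j' - base') mod mu"
    if "j' \<le> r" "r < K - lam K D (2*i)" for r
    using AIR_odd_block_iff[of "i - 1" r k] odd_block[OF that] i1 il j'_mod
    unfolding idx base'_def mu_def by simp
  show ?thesis unfolding j'_def[symmetric]
  proof (rule last_one_aboveI)
    show "j' < K - lam K D (2*i)" using kr unfolding j'_def by simp
    then show "AIR K D j' k = 1" using one_iff by simp
    show "AIR K D r k \<noteq> 1" if "j' < r" "r < K - lam K D (2*i)" for r
      using one_iff[of r] mod_eq_imp_le_diff[of "r - base'" mu "j' - base'"] that kl
      unfolding j'_def mu_def by auto
  qed
qed

lemma last_one_above_block:
  assumes "0 \<le> i" and "2*i \<le> int (ell K D) + 1"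
    and "K - D - lam K D (2*i - 1) \<le> k" and "k < K - D"
  shows "last_one_above K D k (k + D - lam K D (2*i)) (K - lam K D (2*i))"
proof (cases "i = 0")
  case True
  then show ?thesis using last_one_above_first_block assms(3,4) by simp
next
  case False
  then show ?thesis using last_one_above_later_block assms by simp
qed

lemma d_up_odd_block:
  assumes air: "AIR K D j k = 1" and i0: "0 \<le> i" and il: "2*i + 1 \<le> int (ell K D)"
    and io: "in_odd K D i j k"
  shows "d_up K D j k = lam K D (2*i + 1)"
proof -
  define lm where "lm = lam K D (2*i + 1)"
  define base where "base = K - lam K D (2*i)"
  have in_block: "in_odd K D i r k" if "base \<le> r" "r \<le> j" for r
    using io that unfolding in_odd_def base_def by auto
  have one_iff: "AIR K D r k = 1 \<longleftrightarrow> (r - base) mod lm = (j - base) mod lm"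
    if "base \<le> r" "r \<le> j" for r
    using AIR_odd_block_iff[OF i0 il in_block[OF that]] AIR_odd_block_iff[OF i0 il io] air
    unfolding base_def lm_def by simp
  have gap: "AIR K D r k \<noteq> 1" if "j - lm < r" "r < j" "base \<le> r" for r
  proof
    assume "AIR K D r k = 1"
    then have "lm \<le> (j - base) - (r - base)"
      using one_iff[of r] that by (intro mod_eq_imp_le_diff) simp_all
    then show False using that(1) by simp
  qed
  have "last_one_above K D k (j - lm) j"
  proof (cases "base \<le> j - lm")
    case True
    have "(j - lm - base) mod lm = (j - base) mod lm"
      by (metis diff_right_commute minus_mod_self2)
    moreover have lm_pos: "0 < lm" using io unfolding in_odd_def lm_def by simp
    ultimately have "AIR K D (j - lm) k = 1" using one_iff[of "j - lm"] True by simp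
    show ?thesis
    proof (rule last_one_aboveI)
      show "j - lm < j" using lm_pos by simp
      show "AIR K D r k \<noteq> 1" if "j - lm < r" "r < j" for r using gap that True by simp
    qed fact
  next
    case False
    have "(j - base) mod lm = k - (K - D - lm)"
      using AIR_odd_block_iff[OF i0 il io] air unfolding base_def lm_def by simp
    moreover have "(j - base) mod lm = j - base"
      using False in_block[of j] io unfolding in_odd_def base_def by (simp add: mod_pos_pos_trivial)
    ultimately have j_lm: "j - lm = k + D - lam K D (2*i)" unfolding base_def by simp
    have "lm \<le> lam K D (2*i - 1)"
      using lam_add_two_le[of "2*i - 1"] i0 unfolding lm_def by (simp add: algebra_simps)
    then have "last_one_above K D k (j - lm) base"
      unfolding j_lm base_def using last_one_above_block[OF i0] il io
      unfolding in_odd_def lm_def by simp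
    moreover have "base \<le> j" using io unfolding in_odd_def base_def by simp
    ultimately show ?thesis by (rule last_one_above_extend) (use gap False in simp)
  qed
  then show ?thesis unfolding lm_def using d_up_eq_last_one_above by simp
qed

lemma d_up_even_block:
  assumes air: "AIR K D j k = 1" and i0: "0 \<le> i" and il: "2*i \<le> int (ell K D)"
    and ie: "in_even K D i j k" and c: "0 \<le> c" and d: "0 \<le> d" "d < lam K D (2*i)"
    and k: "k - (K - D - lam K D (2*i - 1)) = c * lam K D (2*i) + d"
  shows "d_up K D j k = lam K D (2*i - 1) - c * lam K D (2*i)"
proof -
  define base where "base = K - lam K D (2*i)"
  have row_of_one: "r = base + d" if "base \<le> r" "r \<le> j" "AIR K D r k = 1" for r
  proof -
    have "in_even K D i r k" using ie that(1,2) unfolding in_even_def base_def by auto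
    then show ?thesis using AIR_even_block[OF i0 _ that(3)] k d unfolding base_def by simp
  qed
  have j: "j = base + d" using row_of_one[of j] ie air unfolding in_even_def base_def by simp
  have "K - D - lam K D (2*i - 1) \<le> k" "k < K - D"
    using ie lam_nonneg[of "2*i + 1"] unfolding in_even_def by auto
  then have "last_one_above K D k (k + D - lam K D (2*i)) base"
    unfolding base_def using last_one_above_block[OF i0] il by simp
  then have "last_one_above K D k (k + D - lam K D (2*i)) j"
  proof (rule last_one_above_extend)
    show "base \<le> j" using j d(1) by simp
    show "AIR K D r k \<noteq> 1" if "base \<le> r" "r < j" for r using row_of_one[of r] that j by force
  qed
  then show ?thesis using d_up_eq_last_one_above j k unfolding base_def by simp
qed

end

theorem lemma2:
  fixes K D j k :: int
  assumes "1 \<le> D" and "D \<le> K - 1"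
    and "AIR K D j k = 1" and "j \<ge> K - D"
  shows "(\<forall>i. 0 \<le> i \<and> i \<le> (int (ell K D) + 1) div 2 - 1 \<and> in_odd K D i j k
            \<longrightarrow> d_up K D j k = lam K D (2*i + 1))
       \<and> (\<forall>i c d. 0 \<le> i \<and> i \<le> int (ell K D) div 2 \<and> in_even K D i j k
            \<and> 0 \<le> c \<and> 0 \<le> d \<and> d < lam K D (2*i)
            \<and> k - (K - D - lam K D (2*i - 1)) = c * lam K D (2*i) + d
            \<longrightarrow> d_up K D j k = lam K D (2*i - 1) - c * lam K D (2*i))"
proof -
  interpret air_matrix K D using assms(1,2) by unfold_locales simp_all
  show ?thesis
  proof (intro conjI allI impI)
    fix i assume "0 \<le> i \<and> i \<le> (int (ell K D) + 1) div 2 - 1 \<and> in_odd K D i j k"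
    moreover from this have "2*i + 1 \<le> int (ell K D)" by linarith
    ultimately show "d_up K D j k = lam K D (2*i + 1)"
      using d_up_odd_block[OF assms(3)] by blast
  next
    fix i c d assume "0 \<le> i \<and> i \<le> int (ell K D) div 2 \<and> in_even K D i j k
      \<and> 0 \<le> c \<and> 0 \<le> d \<and> d < lam K D (2*i)
      \<and> k - (K - D - lam K D (2*i - 1)) = c * lam K D (2*i) + d"
    moreover from this have "2*i \<le> int (ell K D)" by linarith
    ultimately show "d_up K D j k = lam K D (2*i - 1) - c * lam K D (2*i)"
      using d_up_even_block[OF assms(3)] by blast
  qed
qed

end
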